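(* Let $k\ge 2$ and $n>2k$ be integers, $X=\{1,\dots,n\}$, $x\in X$, $\mathcal S_x=\left\{S\in\binom{X}{k}\colon x\in S\right\}$ and $\mathcal A=\left\{A\in\binom{X}{k}\colon |A\cap\{1,2,3\}|\ge 2\right\}$. Then $$|\mathcal I(\mathcal S_x)|<\tfrac23\,|\mathcal I(\mathcal A)|.$$
   Context: $\binom{X}{k}$ denotes the family of all $k$-element subsets of $X$. For a family $\mathcal F$, $\mathcal I(\mathcal F):=\{F\cap F'\colon F,F'\in\mathcal F,\ F\neq F'\}$. *)

theory Defs
  imports Complex_Main
begin

definition k_subsets :: "'a set \<Rightarrow> nat \<Rightarrow> 'a set set" where
  "k_subsets X k = {S. S \<subseteq> X \<and> card S = k}"

definition intersections :: "'a set set \<Rightarrow> 'a set set" where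
  "intersections F = {F1 \<inter> F2 | F1 F2. F1 \<in> F \<and> F2 \<in> F \<and> F1 \<noteq> F2}"

end

theory Submission
  imports Defs
begin

(* For n >= 2k both intersection families are explicit: I(S_x) consists of the sets of size
   less than k containing x, and I(A) of the sets of size less than k meeting Y = {1,2,3}
   (two members of A each contain two points of Y, so they share one).  Each point of Y lies in
   exactly |I(S_x)| of the latter sets, so double counting gives 3 |I(S_x)| as the sum of
   |T \<inter> Y| over T in I(A), whence 2 |I(A)| - 3 |I(S_x)| is the number of these T with
   |T \<inter> Y| = 1 minus the number with Y \<subseteq> T.  It is positive: deleting two fixed
   points of Y maps the second kind injectively, but not onto, the first kind. *)

definition small_subsets :: "'a set \<Rightarrow> nat \<Rightarrow> 'a set set" where
  "small_subsets N k = {T. T \<subseteq> N \<and> card T < k}"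

lemma two_distinct_if_card_ge_2:
  assumes "2 \<le> card A"
  obtains a b where "a \<in> A" "b \<in> A" "a \<noteq> b"
proof -
  have "finite A" using assms card.infinite by fastforce
  then show ?thesis using assms that card_le_Suc0_iff_eq[of A] by fastforce
qed

lemma card_Int_less_if_card_eq:
  assumes "finite F1" "finite F2" "card F1 = card F2" "F1 \<noteq> F2"
  shows "card (F1 \<inter> F2) < card F1"
proof (rule psubset_card_mono)
  have "\<not> F1 \<subseteq> F2" using assms card_subset_eq by metis
  then show "F1 \<inter> F2 \<subset> F1" by blast
qed (use assms in simp)

lemma intersections_subset_small_subsets:
  assumes "finite N" "F \<subseteq> k_subsets N k"
  shows "intersections F \<subseteq> small_subsets N k"
proof
  fix T assume "T \<in> intersections F"
  then obtain F1 F2 where F: "F1 \<in> k_subsets N k" "F2 \<in> k_subsets N k" "F1 \<noteq> F2" "T = F1 \<inter> F2"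
    using assms(2) unfolding intersections_def by blast
  have "finite F1" "finite F2" "card F1 = k" "card F2 = k"
    using F assms(1) finite_subset unfolding k_subsets_def by auto
  then have "card T < k" using card_Int_less_if_card_eq F(3,4) by metis
  then show "T \<in> small_subsets N k" using F unfolding small_subsets_def k_subsets_def by blast
qed

lemma Int_mem_intersections: "F1 \<in> F \<Longrightarrow> F2 \<in> F \<Longrightarrow> F1 \<noteq> F2 \<Longrightarrow> F1 \<inter> F2 \<in> intersections F"
  unfolding intersections_def by blast

lemma disjoint_subsets_with_card:
  assumes "finite Z" "2 * r \<le> card Z"
  obtains B C where "B \<subseteq> Z" "C \<subseteq> Z" "B \<inter> C = {}" "card B = r" "card C = r"
proof -
  obtain B where B: "B \<subseteq> Z" "card B = r" using obtain_subset_with_card_n[of r Z] assms by auto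
  have "r \<le> card (Z - B)" using B assms by (simp add: card_Diff_subset finite_subset)
  then obtain C where C: "C \<subseteq> Z - B" "card C = r" using obtain_subset_with_card_n by metis
  show ?thesis using B C that by blast
qed

lemma k_subsets_meeting_in:
  assumes "finite N" "T \<subseteq> N" "a \<in> N - T" "b \<in> N - T" "a \<noteq> b"
    and "card T < k" "2 * k \<le> card N + card T"
  obtains F1 F2 where "F1 \<in> k_subsets N k" "F2 \<in> k_subsets N k" "a \<in> F1" "b \<in> F2" "F1 \<inter> F2 = T"
proof -
  define r where "r = k - card T - 1"
  define Z where "Z = N - T - {a, b}"
  have "finite T" using assms finite_subset by blast
  have "card Z = card N - card T - 2"
    unfolding Z_def using assms \<open>finite T\<close> by (simp add: card_Diff_subset)
  then have "2 * r \<le> card Z" unfolding r_def using assms by linarith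
  moreover have "finite Z" unfolding Z_def using assms by simp
  ultimately obtain B C where BC: "B \<subseteq> Z" "C \<subseteq> Z" "B \<inter> C = {}" "card B = r" "card C = r"
    using disjoint_subsets_with_card by metis
  have "finite B" "finite C" using BC \<open>finite Z\<close> finite_subset by blast+
  have Z: "Z \<subseteq> N" "T \<inter> Z = {}" "a \<notin> Z" "b \<notin> Z" unfolding Z_def by auto
  define F1 where "F1 = insert a (T \<union> B)"
  define F2 where "F2 = insert b (T \<union> C)"
  have "T \<inter> B = {}" "T \<inter> C = {}" "a \<notin> T \<union> B" "b \<notin> T \<union> C"
    using BC Z assms(3,4) by blast+
  then have "card F1 = k" "card F2 = k"
    unfolding F1_def F2_def using BC assms(6) \<open>finite B\<close> \<open>finite C\<close> \<open>finite T\<close>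
    by (simp_all add: card_Un_disjoint r_def)
  moreover have "F1 \<subseteq> N" "F2 \<subseteq> N"
    unfolding F1_def F2_def using BC Z assms(2-4) by blast+
  moreover have "F1 \<inter> F2 = T"
    unfolding F1_def F2_def using BC Z assms(3-5) by blast
  ultimately show ?thesis
    using that unfolding F1_def F2_def k_subsets_def by blast
qed

lemma two_distinct_outside:
  assumes "finite N" "T \<subseteq> N" "card T + 2 \<le> card N"
  obtains a b where "a \<in> N - T" "b \<in> N - T" "a \<noteq> b"
proof -
  have "2 \<le> card (N - T)" using assms by (simp add: card_Diff_subset finite_subset)
  then show ?thesis using two_distinct_if_card_ge_2 that by blast
qed

lemma mem_intersections_k_subsetsI:
  assumes "finite N" "T \<subseteq> N" "a \<in> N - T" "b \<in> N - T" "a \<noteq> b"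
    and "card T < k" "2 * k \<le> card N + card T"
    and "\<And>F. F \<in> k_subsets N k \<Longrightarrow> insert a T \<subseteq> F \<Longrightarrow> P F"
    and "\<And>F. F \<in> k_subsets N k \<Longrightarrow> insert b T \<subseteq> F \<Longrightarrow> P F"
  shows "T \<in> intersections {F \<in> k_subsets N k. P F}"
proof -
  obtain F1 F2 where F: "F1 \<in> k_subsets N k" "F2 \<in> k_subsets N k" "a \<in> F1" "b \<in> F2" "F1 \<inter> F2 = T"
    using k_subsets_meeting_in[OF assms(1-7)] by blast
  then have "F1 \<in> {F \<in> k_subsets N k. P F}" "F2 \<in> {F \<in> k_subsets N k. P F}"
    using assms(8,9) by blast+
  moreover have "F1 \<noteq> F2" using F assms(3) by blast
  ultimately have "F1 \<inter> F2 \<in> intersections {F \<in> k_subsets N k. P F}"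
    by (rule Int_mem_intersections)
  then show ?thesis using F(5) by simp
qed

lemma intersections_star:
  assumes "finite N" "x \<in> N" "2 * k \<le> card N"
  shows "intersections {S \<in> k_subsets N k. x \<in> S} = {T \<in> small_subsets N k. x \<in> T}"
proof
  have "intersections {S \<in> k_subsets N k. x \<in> S} \<subseteq> small_subsets N k"
    using assms(1) by (rule intersections_subset_small_subsets) blast
  moreover have "x \<in> T" if "T \<in> intersections {S \<in> k_subsets N k. x \<in> S}" for T
    using that unfolding intersections_def by blast
  ultimately show "intersections {S \<in> k_subsets N k. x \<in> S} \<subseteq> {T \<in> small_subsets N k. x \<in> T}"
    by blast
next
  show "{T \<in> small_subsets N k. x \<in> T} \<subseteq> intersections {S \<in> k_subsets N k. x \<in> S}"
  proof
    fix T assume "T \<in> {T \<in> small_subsets N k. x \<in> T}"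
    then have T: "T \<subseteq> N" "card T < k" "x \<in> T" unfolding small_subsets_def by auto
    have "card T \<noteq> 0" using T assms(1) finite_subset by (metis card_0_eq empty_iff)
    then have "card T + 2 \<le> card N" "2 * k \<le> card N + card T" using T(2) assms(3) by linarith+
    then obtain a b where ab: "a \<in> N - T" "b \<in> N - T" "a \<noteq> b"
      using two_distinct_outside[OF assms(1) T(1)] by blast
    show "T \<in> intersections {S \<in> k_subsets N k. x \<in> S}"
      using T(3) \<open>2 * k \<le> card N + card T\<close>
      by (intro mem_intersections_k_subsetsI[OF assms(1) T(1) ab T(2)]) auto
  qed
qed

lemma Int_Int_nonempty_if_card_traces:
  assumes "finite Y" "card Y < card (A \<inter> Y) + card (B \<inter> Y)"
  shows "A \<inter> B \<inter> Y \<noteq> {}"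
proof
  assume "A \<inter> B \<inter> Y = {}"
  then have "card ((A \<inter> Y) \<union> (B \<inter> Y)) = card (A \<inter> Y) + card (B \<inter> Y)"
    using assms(1) by (intro card_Un_disjoint) auto
  moreover have "card ((A \<inter> Y) \<union> (B \<inter> Y)) \<le> card Y"
    using assms(1) by (intro card_mono) auto
  ultimately show False using assms(2) by simp
qed

lemma two_distinct_outside_with_large_traces:
  assumes "finite N" "Y \<subseteq> N" "card Y = 3" "T \<subseteq> N" "T \<inter> Y \<noteq> {}" "card T + 2 \<le> card N"
  obtains a b where "a \<in> N - T" "b \<in> N - T" "a \<noteq> b"
    "2 \<le> card (insert a T \<inter> Y)" "2 \<le> card (insert b T \<inter> Y)"
proof (cases "2 \<le> card (T \<inter> Y)")
  case True
  have "finite Y" using assms(1,2) finite_subset by blast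
  obtain a b where ab: "a \<in> N - T" "b \<in> N - T" "a \<noteq> b"
    using two_distinct_outside[OF assms(1,4,6)] by blast
  have "card (T \<inter> Y) \<le> card (insert c T \<inter> Y)" for c
    using \<open>finite Y\<close> by (intro card_mono) auto
  then have "2 \<le> card (insert c T \<inter> Y)" for c using True le_trans by blast
  then show ?thesis using ab that by blast
next
  case False
  have "finite Y" using assms(1,2) finite_subset by blast
  moreover have "card (T \<inter> Y) \<noteq> 0" using assms(5) \<open>finite Y\<close> by simp
  ultimately have "card (T \<inter> Y) = 1" using False by linarith
  then have "card (Y - T) = 2" using assms(3) \<open>finite Y\<close>
    by (simp add: card_Diff_subset_Int Int_commute)
  then obtain a b where ab: "Y - T = {a, b}" "a \<noteq> b" by (auto simp: card_2_iff)
  have "card (insert c T \<inter> Y) = 2" if "c \<in> Y - T" for c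
    using that \<open>card (T \<inter> Y) = 1\<close> \<open>finite Y\<close> by simp
  then have "card (insert a T \<inter> Y) = 2" "card (insert b T \<inter> Y) = 2" using ab by auto
  moreover have "a \<in> N - T" "b \<in> N - T" using ab assms(2) by auto
  ultimately show ?thesis using ab(2) that by (metis order_refl)
qed

lemma intersections_trace_ge_2:
  assumes "finite N" "Y \<subseteq> N" "card Y = 3" "2 * k \<le> card N"
  shows "intersections {A \<in> k_subsets N k. 2 \<le> card (A \<inter> Y)} = {T \<in> small_subsets N k. T \<inter> Y \<noteq> {}}"
proof
  have "finite Y" using assms(1,2) finite_subset by blast
  have "intersections {A \<in> k_subsets N k. 2 \<le> card (A \<inter> Y)} \<subseteq> small_subsets N k"
    using assms(1) by (rule intersections_subset_small_subsets) blast
  moreover have "T \<inter> Y \<noteq> {}" if T: "T \<in> intersections {A \<in> k_subsets N k. 2 \<le> card (A \<inter> Y)}" for T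
  proof -
    obtain F1 F2 where "2 \<le> card (F1 \<inter> Y)" "2 \<le> card (F2 \<inter> Y)" "T = F1 \<inter> F2"
      using T unfolding intersections_def by blast
    then show ?thesis using Int_Int_nonempty_if_card_traces[OF \<open>finite Y\<close>, of F1 F2] assms(3) by simp
  qed
  ultimately show "intersections {A \<in> k_subsets N k. 2 \<le> card (A \<inter> Y)} \<subseteq> {T \<in> small_subsets N k. T \<inter> Y \<noteq> {}}"
    by blast
next
  show "{T \<in> small_subsets N k. T \<inter> Y \<noteq> {}} \<subseteq> intersections {A \<in> k_subsets N k. 2 \<le> card (A \<inter> Y)}"
  proof
    fix T assume "T \<in> {T \<in> small_subsets N k. T \<inter> Y \<noteq> {}}"
    then have T: "T \<subseteq> N" "card T < k" "T \<inter> Y \<noteq> {}" unfolding small_subsets_def by auto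
    have "finite T" "finite Y" using T(1) assms(1,2) finite_subset by blast+
    then have "card T \<noteq> 0" using T(3) by auto
    then have "card T + 2 \<le> card N" "2 * k \<le> card N + card T" using T(2) assms(4) by linarith+
    then obtain a b where ab: "a \<in> N - T" "b \<in> N - T" "a \<noteq> b"
      and traces: "2 \<le> card (insert a T \<inter> Y)" "2 \<le> card (insert b T \<inter> Y)"
      using two_distinct_outside_with_large_traces[OF assms(1-3) T(1,3)] by blast
    have "card (S \<inter> Y) \<le> card (F \<inter> Y)" if "S \<subseteq> F" for S F
      using that \<open>finite Y\<close> by (intro card_mono) auto
    then show "T \<in> intersections {A \<in> k_subsets N k. 2 \<le> card (A \<inter> Y)}"
      using ab T(2) \<open>2 * k \<le> card N + card T\<close> traces
      by (intro mem_intersections_k_subsetsI[OF assms(1) T(1) ab T(2)]) (meson le_trans)+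
  qed
qed

lemma card_small_subsets:
  assumes "finite A"
  shows "card (small_subsets A m) = (\<Sum>j<m. card A choose j)"
proof -
  have "small_subsets A m = (\<Union>j<m. {T. T \<subseteq> A \<and> card T = j})"
    unfolding small_subsets_def by auto
  also have "card \<dots> = (\<Sum>j<m. card {T. T \<subseteq> A \<and> card T = j})"
    using assms by (intro card_UN_disjoint) auto
  finally show ?thesis using n_subsets[OF assms] by simp
qed

lemma card_small_subsets_containing:
  assumes "finite N" "x \<in> N"
  shows "card {T \<in> small_subsets N k. x \<in> T} = card (small_subsets (N - {x}) (k - 1))"
proof (rule bij_betw_same_card[of "\<lambda>T. T - {x}"], rule bij_betw_byWitness[where f' = "insert x"])
  have card_remove: "card (T - {x}) < k - 1 \<longleftrightarrow> card T < k" if "T \<subseteq> N" "x \<in> T" for T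
  proof -
    have "finite T" using that(1) assms(1) finite_subset by blast
    then have "0 < card T" "card (T - {x}) = card T - 1" using that(2) card_gt_0_iff by auto
    then show ?thesis by linarith
  qed
  show "(\<lambda>T. T - {x}) ` {T \<in> small_subsets N k. x \<in> T} \<subseteq> small_subsets (N - {x}) (k - 1)"
  proof
    fix S assume "S \<in> (\<lambda>T. T - {x}) ` {T \<in> small_subsets N k. x \<in> T}"
    then obtain T where "T \<subseteq> N" "card T < k" "x \<in> T" "S = T - {x}"
      unfolding small_subsets_def by blast
    then show "S \<in> small_subsets (N - {x}) (k - 1)"
      using card_remove[of T] unfolding small_subsets_def by blast
  qed
  have "card (insert x T) < k" if "T \<subseteq> N - {x}" "card T < k - 1" for T
  proof -
    have "finite T" using that(1) assms(1) finite_subset by blast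
    moreover have "x \<notin> T" using that(1) by blast
    ultimately show ?thesis using that(2) by simp
  qed
  then show "insert x ` small_subsets (N - {x}) (k - 1) \<subseteq> {T \<in> small_subsets N k. x \<in> T}"
    using assms(2) unfolding small_subsets_def by auto
  show "\<forall>T \<in> {T \<in> small_subsets N k. x \<in> T}. insert x (T - {x}) = T" by blast
  show "\<forall>T \<in> small_subsets (N - {x}) (k - 1). insert x T - {x} = T"
    unfolding small_subsets_def by blast
qed

lemma card_small_subsets_containing_eq:
  assumes "finite N" "x \<in> N" "y \<in> N"
  shows "card {T \<in> small_subsets N k. x \<in> T} = card {T \<in> small_subsets N k. y \<in> T}"
  using assms by (simp add: card_small_subsets_containing card_small_subsets)

lemma sum_add_card_1_eq_double_card_add_card_3:
  fixes c :: "'a \<Rightarrow> nat"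
  assumes "finite U" "\<forall>T\<in>U. c T \<in> {1, 2, 3}"
  shows "sum c U + card {T \<in> U. c T = 1} = 2 * card U + card {T \<in> U. c T = 3}"
proof -
  have "sum c U + card {T \<in> U. c T = 1} = (\<Sum>T\<in>U. c T + of_bool (c T = 1))"
    using assms(1) by (simp add: sum.distrib Int_def)
  also have "\<dots> = (\<Sum>T\<in>U. 2 + of_bool (c T = 3))"
    using assms(2) by (intro sum.cong) auto
  also have "\<dots> = 2 * card U + card {T \<in> U. c T = 3}"
    using assms(1) by (simp only: sum.distrib) (simp add: Int_def)
  finally show ?thesis .
qed

lemma subset_with_card_and_singleton_trace:
  assumes "finite N" "Y \<subseteq> N" "y \<in> Y" "2 \<le> k" "card Y + k \<le> card N"
  obtains W where "W \<subseteq> N" "card W = k - 1" "W \<inter> Y = {y}"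
proof -
  have "k - 2 \<le> card (N - Y)" using assms by (simp add: card_Diff_subset finite_subset)
  then obtain R where R: "R \<subseteq> N - Y" "card R = k - 2"
    using obtain_subset_with_card_n by metis
  have "finite R" using R assms(1) finite_subset by blast
  moreover have "y \<notin> R" using R assms(3) by blast
  ultimately have "card (insert y R) = k - 1"
    using R(2) assms(4) by simp
  moreover have "insert y R \<inter> Y = {y}" "insert y R \<subseteq> N" using R assms(2,3) by auto
  ultimately show ?thesis using that by blast
qed

lemma card_supersets_less_card_singleton_traces:
  assumes "finite N" "Y \<subseteq> N" "2 \<le> card Y" "2 \<le> k" "card Y + k \<le> card N"
  shows "card {T \<in> small_subsets N k. Y \<subseteq> T} < card {T \<in> small_subsets N k. card (T \<inter> Y) = 1}"
    (is "card ?full < card ?single")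
proof -
  have "finite Y" using assms(1,2) finite_subset by blast
  obtain y where "y \<in> Y" using two_distinct_if_card_ge_2[OF assms(3)] by blast
  define f where "f T = T - (Y - {y})" for T
  have card_f: "card (f T) < k - 1" if "T \<in> ?full" for T
  proof -
    have "finite T" using that assms(1) finite_subset unfolding small_subsets_def by blast
    then have "card (f T) = card T - (card Y - 1)"
      unfolding f_def using that \<open>y \<in> Y\<close> \<open>finite Y\<close> by (subst card_Diff_subset) auto
    moreover have "card Y \<le> card T" "card T < k"
      using that \<open>finite T\<close> card_mono unfolding small_subsets_def by auto
    ultimately show ?thesis using assms(3) by linarith
  qed
  have inj: "inj_on f ?full"
  proof (rule inj_onI)
    fix T T' assume "T \<in> ?full" "T' \<in> ?full" "f T = f T'"
    then show "T = T'" unfolding f_def by blast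
  qed
  have "f ` ?full \<subset> ?single"
  proof
    show "f ` ?full \<subseteq> ?single"
    proof
      fix S assume "S \<in> f ` ?full"
      then obtain T where T: "T \<in> ?full" "S = f T" by blast
      then have "S \<inter> Y = {y}" "S \<subseteq> N" unfolding f_def small_subsets_def using \<open>y \<in> Y\<close> by auto
      then show "S \<in> ?single" using card_f[OF T(1)] T(2) unfolding small_subsets_def by auto
    qed
    obtain W where W: "W \<subseteq> N" "card W = k - 1" "W \<inter> Y = {y}"
      using subset_with_card_and_singleton_trace[OF assms(1,2) \<open>y \<in> Y\<close> assms(4,5)] by blast
    then have "W \<in> ?single" using assms(4) unfolding small_subsets_def by auto
    moreover have "W \<notin> f ` ?full"
    proof
      assume "W \<in> f ` ?full"
      then obtain T where "T \<in> ?full" "W = f T" by blast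
      then show False using card_f[of T] W(2) by simp
    qed
    ultimately show "f ` ?full \<noteq> ?single" by blast
  qed
  moreover have "finite ?single"
    using assms(1) finite_subset[of ?single "Pow N"] unfolding small_subsets_def by auto
  ultimately have "card (f ` ?full) < card ?single" by (simp add: psubset_card_mono)
  then show ?thesis using card_image[OF inj] by simp
qed

lemma sum_card_traces_eq:
  assumes "finite N" "Y \<subseteq> N" "x \<in> N"
  shows "(\<Sum>T \<in> {T \<in> small_subsets N k. T \<inter> Y \<noteq> {}}. card (T \<inter> Y))
    = card {T \<in> small_subsets N k. x \<in> T} * card Y"
proof -
  let ?U = "{T \<in> small_subsets N k. T \<inter> Y \<noteq> {}}"
  have "finite Y" using assms(1,2) finite_subset by blast
  have "finite ?U"
    using assms(1) finite_subset[of ?U "Pow N"] unfolding small_subsets_def by auto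
  have "card {T \<in> ?U. i \<in> T} = card {T \<in> small_subsets N k. x \<in> T}" if "i \<in> Y" for i
  proof -
    have "{T \<in> ?U. i \<in> T} = {T \<in> small_subsets N k. i \<in> T}" using that by blast
    moreover have "i \<in> N" using that assms(2) by blast
    ultimately show ?thesis using card_small_subsets_containing_eq[OF assms(1) _ assms(3)] by simp
  qed
  then have "(\<Sum>T \<in> ?U. card {i \<in> Y. i \<in> T}) = card {T \<in> small_subsets N k. x \<in> T} * card Y"
    using \<open>finite ?U\<close> \<open>finite Y\<close> by (intro sum_multicount) auto
  moreover have "{i \<in> Y. i \<in> T} = T \<inter> Y" for T by blast
  ultimately show ?thesis by simp
qed

lemma three_card_star_less_two_card_meeting:
  assumes "finite N" "Y \<subseteq> N" "card Y = 3" "x \<in> N" "2 \<le> k" "3 + k \<le> card N"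
  shows "3 * card {T \<in> small_subsets N k. x \<in> T} < 2 * card {T \<in> small_subsets N k. T \<inter> Y \<noteq> {}}"
proof -
  define e where "e = card {T \<in> small_subsets N k. x \<in> T}"
  define U where "U = {T \<in> small_subsets N k. T \<inter> Y \<noteq> {}}"
  have "finite Y" "Y \<noteq> {}" using assms(1-3) finite_subset by auto
  have "finite U"
    using assms(1) finite_subset[of U "Pow N"] unfolding U_def small_subsets_def by auto
  have full_trace: "card (T \<inter> Y) = 3 \<longleftrightarrow> Y \<subseteq> T" for T
  proof
    assume "card (T \<inter> Y) = 3"
    then have "T \<inter> Y = Y" using card_subset_eq[OF \<open>finite Y\<close>, of "T \<inter> Y"] assms(3) by simp
    then show "Y \<subseteq> T" by blast
  next
    assume "Y \<subseteq> T"
    then show "card (T \<inter> Y) = 3" using assms(3) by (simp add: Int_absorb1)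
  qed
  have "\<forall>T\<in>U. card (T \<inter> Y) \<in> {1, 2, 3}"
  proof
    fix T assume "T \<in> U"
    then have "card (T \<inter> Y) \<noteq> 0" using \<open>finite Y\<close> unfolding U_def by simp
    moreover have "card (T \<inter> Y) \<le> 3" using card_mono[OF \<open>finite Y\<close>, of "T \<inter> Y"] assms(3) by auto
    ultimately show "card (T \<inter> Y) \<in> {1, 2, 3}" by auto
  qed
  then have "3 * e + card {T \<in> U. card (T \<inter> Y) = 1} = 2 * card U + card {T \<in> U. card (T \<inter> Y) = 3}"
    using sum_add_card_1_eq_double_card_add_card_3[OF \<open>finite U\<close>, of "\<lambda>T. card (T \<inter> Y)"]
      sum_card_traces_eq[OF assms(1,2,4), of k] assms(3) unfolding e_def U_def by simp
  moreover have "{T \<in> U. card (T \<inter> Y) = 3} = {T \<in> small_subsets N k. Y \<subseteq> T}"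
    unfolding U_def using full_trace \<open>Y \<noteq> {}\<close> by auto
  moreover have "{T \<in> U. card (T \<inter> Y) = 1} = {T \<in> small_subsets N k. card (T \<inter> Y) = 1}"
    unfolding U_def by auto
  ultimately have "3 * e + card {T \<in> small_subsets N k. card (T \<inter> Y) = 1}
      = 2 * card U + card {T \<in> small_subsets N k. Y \<subseteq> T}"
    by simp
  moreover have "card {T \<in> small_subsets N k. Y \<subseteq> T} < card {T \<in> small_subsets N k. card (T \<inter> Y) = 1}"
    using card_supersets_less_card_singleton_traces[OF assms(1,2)] assms(3-6) by simp
  ultimately show ?thesis unfolding e_def U_def by linarith
qed

theorem mainTheorem3:
  fixes k n x :: nat
  assumes "k \<ge> 2" and "n > 2 * k" and "x \<in> {1..n}"
  shows "real (card (intersections {S \<in> k_subsets {1..n} k. x \<in> S}))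
       < 2 / 3 * real (card (intersections {A \<in> k_subsets {1..n} k. card (A \<inter> {1,2,3}) \<ge> 2}))"
proof -
  have N: "finite {1..n}" "2 * k \<le> card {1..n}" "3 + k \<le> card {1..n}" using assms by auto
  have Y: "{1, 2, 3} \<subseteq> {1..n}" "card {1, 2, 3 :: nat} = 3" using assms by auto
  have "intersections {S \<in> k_subsets {1..n} k. x \<in> S} = {T \<in> small_subsets {1..n} k. x \<in> T}"
    using intersections_star[OF N(1) assms(3) N(2)] .
  moreover have "intersections {A \<in> k_subsets {1..n} k. card (A \<inter> {1,2,3}) \<ge> 2}
      = {T \<in> small_subsets {1..n} k. T \<inter> {1,2,3} \<noteq> {}}"
    using intersections_trace_ge_2[OF N(1) Y N(2)] .
  moreover have "3 * card {T \<in> small_subsets {1..n} k. x \<in> T}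
      < 2 * card {T \<in> small_subsets {1..n} k. T \<inter> {1,2,3} \<noteq> {}}"
    using three_card_star_less_two_card_meeting[OF N(1) Y assms(3,1) N(3)] .
  ultimately show ?thesis by simp
qed

end
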